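(* Let $q=2^f$ with $f\ge4$, let $q_0<q$ be a power of $2$ with $\gcd(q-1,q_0^2-1)=1$, and let $u\in\mathscr{U}_{q,q_0}$. The only automorphism of $\Gamma_u$ that fixes every vertex of $\{\varepsilon\}\cup\Omega_\infty$ is the identity.
   Context: For $a,c\in\mathbb{F}_q$ let $\Phi_{a,c}=\begin{bmatrix}1&0&0\\ a&1&0\\ c&a^{q_0}&1\end{bmatrix}$, $K=\{\Phi_{a,c}: a,c\in\mathbb{F}_q\}\le GL(3,\mathbb{F}_q)$ with identity $\varepsilon=\Phi_{0,0}$; $\Omega_\infty=\{\Phi_{0,c}:c\in\mathbb{F}_q^*\}$ and for $v\in\mathbb{F}_q$, $\Omega_v=\{\Phi_{a,va^{q_0+1}}: a\in\mathbb{F}_q^*\}$. $\Gamma_u=\mathrm{Cay}(K,\Omega_u\cup\Omega_{u+1})$ is the graph with vertex set $K$, $x,y$ adjacent iff $xy^{-1}\in\Omega_u\cup\Omega_{u+1}$. $\mathscr{U}_{q,q_0}$ is the set of $u\in\mathbb{F}_q$ such that (U1) $u=(1+\eta^{q_0})/(\eta+\eta^{q_0})$ for some primitive element $\eta$ of $\mathbb{F}_q$, and (U2) $X^{q_0+1}+uX^{q_0}+(u+1)X+1$ has no roots in $\mathbb{F}_q$. *)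

theory Defs
  imports "HOL-Analysis.Analysis"
begin

definition Phi :: "nat \<Rightarrow> 'a::field \<Rightarrow> 'a \<Rightarrow> 'a^3^3" where
  "Phi q0 a c = vector [vector [1, 0, 0], vector [a, 1, 0], vector [c, a ^ q0, 1]]"

definition Kgrp :: "nat \<Rightarrow> (('a::field)^3^3) set" where
  "Kgrp q0 = {Phi q0 a c | a c. True}"

definition Omega_inf :: "nat \<Rightarrow> (('a::field)^3^3) set" where
  "Omega_inf q0 = {Phi q0 0 c | c. c \<noteq> 0}"

definition Omega :: "nat \<Rightarrow> 'a::field \<Rightarrow> ('a^3^3) set" where
  "Omega q0 v = {Phi q0 a (v * a ^ (q0 + 1)) | a. a \<noteq> 0}"

definition cay_adj :: "(('a::field)^3^3) set \<Rightarrow> 'a^3^3 \<Rightarrow> 'a^3^3 \<Rightarrow> bool" where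
  "cay_adj S x y = (\<exists>s\<in>S. x = s ** y)"

definition Gamma_adj :: "nat \<Rightarrow> 'a::field \<Rightarrow> 'a^3^3 \<Rightarrow> 'a^3^3 \<Rightarrow> bool" where
  "Gamma_adj q0 u = cay_adj (Omega q0 u \<union> Omega q0 (u + 1))"

definition graph_automorphism :: "'v set \<Rightarrow> ('v \<Rightarrow> 'v \<Rightarrow> bool) \<Rightarrow> ('v \<Rightarrow> 'v) \<Rightarrow> bool" where
  "graph_automorphism V adj \<sigma> =
     (bij_betw \<sigma> V V \<and> (\<forall>x\<in>V. \<forall>y\<in>V. adj x y \<longleftrightarrow> adj (\<sigma> x) (\<sigma> y)))"

definition primitive_element :: "'a::field \<Rightarrow> bool" where
  "primitive_element \<eta> = (\<eta> \<noteq> 0 \<and> (\<forall>x. x \<noteq> 0 \<longrightarrow> (\<exists>k::nat. x = \<eta> ^ k)))"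

definition U_set :: "nat \<Rightarrow> 'a::field set" where
  "U_set q0 = {u. (\<exists>\<eta>. primitive_element \<eta> \<and> u = (1 + \<eta> ^ q0) / (\<eta> + \<eta> ^ q0))
               \<and> \<not> (\<exists>x. x ^ (q0 + 1) + u * x ^ q0 + (u + 1) * x + 1 = 0)}"

end

theory Submission
  imports Defs
begin

text \<open>
  Write \<open>N x = x ^ (q0 + 1)\<close>. In characteristic 2, \<open>Phi a c\<close> and \<open>Phi b d\<close> are adjacent
  iff \<open>a \<noteq> b\<close> and \<open>c + d + (a + b) ^ q0 * b + u * N (a + b) \<in> {0, N (a + b)}\<close>. Hence a
  vertex \<open>Phi b d\<close> with \<open>b \<noteq> 0\<close> has exactly two neighbours in the centre \<open>{Phi 0 c}\<close>,
  namely \<open>Phi 0 (d + u * N b)\<close> and \<open>Phi 0 (d + (u + 1) * N b)\<close>. An automorphism \<open>\<sigma>\<close>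
  fixing the centre preserves this pair; as \<open>N\<close> is injective (\<open>gcd (q - 1) (q0 + 1) = 1\<close>),
  this leaves only \<open>\<sigma> (Phi b d) \<in> {Phi b d, Phi b (d + N b)}\<close>. The shift is excluded by
  a common neighbour \<open>Phi b d\<close> of \<open>Phi a c\<close> with \<open>b \<notin> {0, a}\<close>: it would force
  \<open>N a \<in> {0, N b, N (a + b), N (a + b) + N b}\<close>, and the last case means
  \<open>a ^ q0 * b = b ^ q0 * a\<close>, i.e. \<open>a ^ (q0 - 1) = b ^ (q0 - 1)\<close>, which is impossible
  as \<open>gcd (q - 1) (q0 - 1) = 1\<close>.
\<close>

lemma of_nat_CARD_eq_0: "of_nat CARD('a::{ring_1,finite}) = (0::'a)"
proof -
  have "(\<Sum>y\<in>UNIV. 1 + y) = (\<Sum>y\<in>UNIV. y :: 'a)"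
    by (rule sum.reindex_bij_witness[where i="\<lambda>y. y - 1" and j="\<lambda>y. 1 + y"]) auto
  then show ?thesis
    by (simp add: sum.distrib)
qed

lemma CHAR_eq_2_if_CARD_eq_power_2:
  assumes "CARD('a::{field,finite}) = 2 ^ f"
  shows "CHAR('a) = 2"
proof -
  have "prime CHAR('a)"
    by (intro prime_CHAR_semidom finite_imp_CHAR_pos) simp
  moreover have "CHAR('a) dvd 2 ^ f"
    using of_nat_CARD_eq_0[where 'a='a] of_nat_eq_0_iff_char_dvd[where 'a='a, of "2 ^ f"] assms
    by simp
  ultimately show ?thesis
    using prime_dvd_power two_is_prime_nat primes_dvd_imp_eq by blast
qed

lemma field_power_card_minus_1:
  fixes x :: "'a::{field,finite}"
  assumes "x \<noteq> 0"
  shows "x ^ (CARD('a) - 1) = 1"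
proof -
  let ?U = "UNIV - {0::'a}"
  have "(\<Prod>y\<in>?U. x * y) = (\<Prod>y\<in>?U. y)"
    by (rule prod.reindex_bij_witness[where i="\<lambda>y. y / x" and j="\<lambda>y. x * y"]) (use assms in auto)
  then have "x ^ card ?U * (\<Prod>y\<in>?U. y) = 1 * (\<Prod>y\<in>?U. y)"
    by (simp add: prod.distrib)
  then show ?thesis
    by (simp add: card_Diff_singleton)
qed

lemma inj_power_if_coprime_card:
  assumes "coprime n (CARD('a::{field,finite}) - 1)" and "n \<noteq> 0"
  shows "inj (\<lambda>x::'a. x ^ n)"
proof (rule injI)
  fix x y :: 'a
  assume eq: "x ^ n = y ^ n"
  show "x = y"
  proof (cases "y = 0")
    case True
    with eq \<open>n \<noteq> 0\<close> show ?thesis by (simp add: power_0_left)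
  next
    case False
    let ?z = "x / y"
    have z_n: "?z ^ n = 1"
      using eq False by (simp add: power_divide)
    then have "?z \<noteq> 0"
      using \<open>n \<noteq> 0\<close> by (auto simp: power_0_left)
    then have z_card: "?z ^ (CARD('a) - 1) = 1"
      by (rule field_power_card_minus_1)
    obtain k l where kl: "n * k = (CARD('a) - 1) * l + 1"
      using bezout_nat[of n "CARD('a) - 1"] assms by auto
    have "?z = ?z ^ ((CARD('a) - 1) * l + 1)"
      by (simp only: power_add power_mult z_card power_one power_one_right mult_1_left)
    also have "\<dots> = 1"
      by (simp only: kl [symmetric] power_mult z_n power_one)
    finally have "?z = 1" .
    with False show ?thesis by simp
  qed
qed

lemma coprime_factors_if_gcd_square_minus_1:
  fixes m n :: nat
  assumes "gcd m (n ^ 2 - 1) = 1"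
  shows "coprime (n + 1) m" and "coprime (n - 1) m"
proof -
  have "n ^ 2 - 1 = (n - 1) * (n + 1)"
    by (cases n) (simp_all add: power2_eq_square)
  with assms have "coprime m ((n - 1) * (n + 1))"
    by (simp add: coprime_iff_gcd_eq_1)
  then have "coprime m (n + 1)" and "coprime m (n - 1)"
    by (simp_all only: coprime_mult_right_iff)
  then show "coprime (n + 1) m" and "coprime (n - 1) m"
    by (simp_all add: coprime_commute)
qed

lemma Phi_eq_iff [simp]: "Phi q0 a c = Phi q0 b d \<longleftrightarrow> a = b \<and> c = d"
proof
  assume "Phi q0 a c = Phi q0 b d"
  then have "Phi q0 a c $ 2 $ 1 = Phi q0 b d $ 2 $ 1" and "Phi q0 a c $ 3 $ 1 = Phi q0 b d $ 3 $ 1"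
    by simp_all
  then show "a = b \<and> c = d"
    by (simp add: Phi_def)
qed simp

lemma Phi_in_Kgrp [simp]: "Phi q0 a c \<in> Kgrp q0"
  by (auto simp: Kgrp_def)

lemma Phi_mult:
  assumes "(a + b) ^ q0 = a ^ q0 + b ^ q0"
  shows "Phi q0 a c ** Phi q0 b d = Phi q0 (a + b) (c + d + a ^ q0 * b)"
  using assms unfolding Phi_def
  by (simp add: matrix_matrix_mult_def vec_eq_iff forall_3 sum_3 algebra_simps)

lemma Gamma_adj_Phi_iff:
  fixes a b c d u :: "'a::field"
  assumes power_q0_add: "\<And>x y::'a. (x + y) ^ q0 = x ^ q0 + y ^ q0"
  shows "Gamma_adj q0 u (Phi q0 a c) (Phi q0 b d) \<longleftrightarrow> a \<noteq> b \<and>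
    c - d - (a - b) ^ q0 * b \<in> {u * (a - b) ^ (q0 + 1), (u + 1) * (a - b) ^ (q0 + 1)}"
proof -
  have "Gamma_adj q0 u (Phi q0 a c) (Phi q0 b d) \<longleftrightarrow>
      (\<exists>g w. g \<noteq> 0 \<and> w \<in> {u, u + 1} \<and> Phi q0 a c = Phi q0 g (w * g ^ (q0 + 1)) ** Phi q0 b d)"
    unfolding Gamma_adj_def cay_adj_def Omega_def by blast
  also have "\<dots> \<longleftrightarrow>
      (\<exists>g w. g \<noteq> 0 \<and> w \<in> {u, u + 1} \<and> Phi q0 a c = Phi q0 (g + b) (w * g ^ (q0 + 1) + d + g ^ q0 * b))"
    by (simp add: Phi_mult power_q0_add)
  also have "\<dots> \<longleftrightarrow> (\<exists>w \<in> {u, u + 1}. a - b \<noteq> 0 \<and> c = w * (a - b) ^ (q0 + 1) + d + (a - b) ^ q0 * b)"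
  proof -
    have shift: "a = g + b \<longleftrightarrow> g = a - b" for g
      by (auto simp: algebra_simps)
    show ?thesis
      by (simp only: Phi_eq_iff shift) blast
  qed
  also have "\<dots> \<longleftrightarrow> a \<noteq> b \<and>
      c - d - (a - b) ^ q0 * b \<in> {u * (a - b) ^ (q0 + 1), (u + 1) * (a - b) ^ (q0 + 1)}"
    by (auto simp: algebra_simps)
  finally show ?thesis .
qed

lemma add_eq_0_iff_CHAR_2:
  assumes "CHAR('a::ring_1) = 2"
  shows "x + y = (0::'a) \<longleftrightarrow> x = y"
  by (metis minus_CHAR_2[OF assms] eq_iff_diff_eq_0)

lemma add_self_CHAR_2:
  assumes "CHAR('a::ring_1) = 2"
  shows "x + x = (0::'a)"
  by (simp add: add_eq_0_iff_CHAR_2[OF assms])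

lemma add_add_self_CHAR_2:
  assumes "CHAR('a::ring_1) = 2"
  shows "x + (x + y) = (y::'a)"
  by (simp add: add_self_CHAR_2[OF assms] flip: add.assoc)

lemma add_eq_iff_CHAR_2:
  assumes "CHAR('a::ring_1) = 2"
  shows "x + y = (z::'a) \<longleftrightarrow> x = z + y"
  by (metis add_diff_cancel minus_CHAR_2[OF assms] diff_add_cancel)

lemma shift_within_pair_CHAR_2:
  fixes y B B' :: "'a::ring_1"
  assumes CHAR_2: "CHAR('a) = 2" and "B \<noteq> 0"
    and "y \<in> {0, B'}" and "y + B \<in> {0, B'}"
  shows "B' = B"
  using assms(2-) by (auto simp: add_eq_0_iff_CHAR_2[OF CHAR_2])

locale Gamma_automorphism_fixing_centre =
  fixes q0 :: nat and u :: "'a::field" and \<sigma> :: "'a^3^3 \<Rightarrow> 'a^3^3"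
  assumes CHAR_2: "CHAR('a) = 2"
    and power_q0_add: "\<And>x y::'a. (x + y) ^ q0 = x ^ q0 + y ^ q0"
    and inj_power_Suc_q0: "inj (\<lambda>x::'a. x ^ (q0 + 1))"
    and inj_power_pred_q0: "inj (\<lambda>x::'a. x ^ (q0 - 1))"
    and automorphism: "graph_automorphism (Kgrp q0) (Gamma_adj q0 u) \<sigma>"
    and fixes_centre: "\<And>c. \<sigma> (Phi q0 0 c) = Phi q0 0 c"
begin

lemma two_eq_0 [simp]: "(2::'a) = 0"
  using of_nat_CHAR[where 'a='a] CHAR_2 by simp

lemmas add_self [simp] = add_self_CHAR_2[OF CHAR_2]
  and add_add_self [simp] = add_add_self_CHAR_2[OF CHAR_2]
  and add_eq_0_iff = add_eq_0_iff_CHAR_2[OF CHAR_2]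
  and add_eq_iff = add_eq_iff_CHAR_2[OF CHAR_2]

lemma q0_neq_0: "q0 \<noteq> 0"
proof
  assume "q0 = 0"
  then have "(1::'a) = 1 + 1"
    using power_q0_add[of 0 0] by simp
  then show False
    using add_self[of 1] by simp
qed

lemma adj_Phi_iff:
  "Gamma_adj q0 u (Phi q0 a c) (Phi q0 b d) \<longleftrightarrow> a \<noteq> b \<and>
    c + d + (a + b) ^ q0 * b + u * (a + b) ^ (q0 + 1) \<in> {0, (a + b) ^ (q0 + 1)}"
proof -
  have "x \<in> {u * C, (u + 1) * C} \<longleftrightarrow> x + u * C \<in> {0, C}" for x C :: 'a
    using add_eq_0_iff[of x "u * C"] add_eq_iff[of x "u * C" C] by (auto simp: distrib_right add.commute)
  then show ?thesis
    using Gamma_adj_Phi_iff[OF power_q0_add] by (simp add: minus_CHAR_2[OF CHAR_2])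
qed

lemma \<sigma>_PhiE:
  obtains a' c' where "\<sigma> (Phi q0 a c) = Phi q0 a' c'"
  using automorphism Phi_in_Kgrp unfolding graph_automorphism_def Kgrp_def bij_betw_def by blast

lemma \<sigma>_preserves_adj:
  "Gamma_adj q0 u (Phi q0 a c) (Phi q0 b d) \<Longrightarrow> Gamma_adj q0 u (\<sigma> (Phi q0 a c)) (\<sigma> (Phi q0 b d))"
  using automorphism by (simp add: graph_automorphism_def)

lemma \<sigma>_fixes_or_shifts:
  assumes "b \<noteq> 0"
  shows "\<sigma> (Phi q0 b d) \<in> {Phi q0 b d, Phi q0 b (d + b ^ (q0 + 1))}"
proof -
  obtain b' d' where \<sigma>_bd: "\<sigma> (Phi q0 b d) = Phi q0 b' d'"
    by (rule \<sigma>_PhiE)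
  define B B' where "B = b ^ (q0 + 1)" and "B' = b' ^ (q0 + 1)"
  have "B \<noteq> 0"
    using assms by (simp add: B_def)
  have central_nbr: "Gamma_adj q0 u (Phi q0 b' d') (Phi q0 0 (d + w * B))" if "w \<in> {u, u + 1}" for w
  proof -
    have "Gamma_adj q0 u (Phi q0 b d) (Phi q0 0 (d + w * B))"
      using that assms by (auto simp: adj_Phi_iff B_def distrib_right)
    from \<sigma>_preserves_adj[OF this] show ?thesis
      by (simp only: \<sigma>_bd fixes_centre)
  qed
  have shifted: "d' + d + w * B + u * B' \<in> {0, B'}" if "w \<in> {u, u + 1}" for w
    using central_nbr[OF that] by (simp add: adj_Phi_iff B'_def add.assoc)
  have y: "d' + d + u * B + u * B' \<in> {0, B'}"
    using shifted[of u] by simp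
  moreover have "d' + d + u * B + u * B' + B \<in> {0, B'}"
    using shifted[of "u + 1"] by (simp add: distrib_right add_ac)
  ultimately have "B' = B"
    by (rule shift_within_pair_CHAR_2[OF CHAR_2 \<open>B \<noteq> 0\<close>])
  with y have "d' + d \<in> {0, B}"
    by (simp add: add_ac)
  have "b' = b"
    using \<open>B' = B\<close> injD[OF inj_power_Suc_q0, of b' b] by (simp add: B_def B'_def)
  moreover have "d' \<in> {d, d + B}"
    using \<open>d' + d \<in> {0, B}\<close> add_eq_0_iff[of d' d] add_eq_iff[of d' d B] by (auto simp: add.commute)
  ultimately show ?thesis
    using \<sigma>_bd by (auto simp: B_def)
qed

lemma power_Suc_q0_add_neq:
  fixes a b :: 'a
  assumes "a \<noteq> 0" and "b \<noteq> 0" and "a \<noteq> b"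
  shows "(a + b) ^ (q0 + 1) \<noteq> a ^ (q0 + 1) + b ^ (q0 + 1)"
proof
  assume "(a + b) ^ (q0 + 1) = a ^ (q0 + 1) + b ^ (q0 + 1)"
  moreover have "(a + b) ^ (q0 + 1) = (a ^ q0 + b ^ q0) * (a + b)"
    by (simp only: power_add power_one_right power_q0_add)
  then have "(a + b) ^ (q0 + 1) = a ^ (q0 + 1) + a ^ q0 * b + b ^ q0 * a + b ^ (q0 + 1)"
    by (simp add: algebra_simps)
  ultimately have "a ^ q0 * b = b ^ q0 * a"
    by (simp add: add_ac add_eq_0_iff)
  then have "a ^ (q0 - 1) * (a * b) = b ^ (q0 - 1) * (a * b)"
    using q0_neq_0 by (metis (no_types, lifting) mult.assoc mult.commute power_minus_mult not_gr_zero)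
  then have "a ^ (q0 - 1) = b ^ (q0 - 1)"
    using assms(1,2) by simp
  then have "a = b"
    by (rule injD[OF inj_power_pred_q0])
  with assms(3) show False ..
qed

lemma \<sigma>_not_shift:
  assumes "a \<noteq> 0" and "b \<noteq> 0" and "b \<noteq> a"
  shows "\<sigma> (Phi q0 a c) \<noteq> Phi q0 a (c + a ^ (q0 + 1))"
proof
  assume \<sigma>_ac: "\<sigma> (Phi q0 a c) = Phi q0 a (c + a ^ (q0 + 1))"
  define A B C E where "A = a ^ (q0 + 1)" and "B = b ^ (q0 + 1)"
    and "C = (a + b) ^ (q0 + 1)" and "E = (a + b) ^ q0 * b"
  define d where "d = c + E + u * C"
  have "Gamma_adj q0 u (Phi q0 a c) (Phi q0 b d)"
    using assms(3) by (simp add: adj_Phi_iff d_def C_def E_def)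
  from \<sigma>_preserves_adj[OF this] have adj: "Gamma_adj q0 u (Phi q0 a (c + A)) (\<sigma> (Phi q0 b d))"
    by (simp only: \<sigma>_ac A_def)
  obtain d' where \<sigma>_bd: "\<sigma> (Phi q0 b d) = Phi q0 b d'" and "d' + d \<in> {0, B}"
    using \<sigma>_fixes_or_shifts[OF assms(2), of d] by (auto simp: B_def add_ac)
  have "A + (d' + d) \<in> {0, C}"
    using adj unfolding \<sigma>_bd adj_Phi_iff C_def [symmetric] E_def [symmetric] by (simp add: d_def add_ac)
  then have "A \<in> {0, B, C, C + B}"
    using \<open>d' + d \<in> {0, B}\<close> add_eq_0_iff[of A B] add_eq_iff[of A B C] by auto
  moreover have "A \<noteq> 0"
    using assms(1) by (simp add: A_def)
  moreover have "A \<noteq> B"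
    using assms(3) injD[OF inj_power_Suc_q0, of a b] by (auto simp: A_def B_def)
  moreover have "A \<noteq> C"
    using assms(2) injD[OF inj_power_Suc_q0, of a "a + b"] by (auto simp: A_def C_def)
  moreover have "A \<noteq> C + B"
    using power_Suc_q0_add_neq[OF assms(1,2) assms(3)[symmetric]] add_eq_iff[of C B A]
    by (auto simp: A_def B_def C_def)
  ultimately show False
    by blast
qed

theorem \<sigma>_fixes_Kgrp:
  assumes "2 < CARD('a)" and "x \<in> Kgrp q0"
  shows "\<sigma> x = x"
proof -
  obtain a c where x: "x = Phi q0 a c"
    using assms(2) by (auto simp: Kgrp_def)
  show ?thesis
  proof (cases "a = 0")
    case True
    then show ?thesis
      by (simp add: x fixes_centre)
  next
    case False
    have "card {0, a} < CARD('a)"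
      using assms(1) by (simp add: card_insert_if)
    then obtain b :: 'a where "b \<notin> {0, a}"
      by (metis UNIV_eq_I less_irrefl)
    then show ?thesis
      using \<sigma>_fixes_or_shifts[OF _, of b] \<sigma>_fixes_or_shifts[OF False, of c] \<sigma>_not_shift[OF False, of b c] x
      by auto
  qed
qed

end

theorem lemma8p2:
  fixes f e q q0 :: nat and u :: "'a::{field,finite}" and \<sigma> :: "'a^3^3 \<Rightarrow> 'a^3^3"
  assumes "q = 2 ^ f" and "CARD('a) = q" and "f \<ge> 4"
    and "q0 = 2 ^ e" and "q0 < q" and "gcd (q - 1) (q0 ^ 2 - 1) = 1"
    and "u \<in> U_set q0"
    and "graph_automorphism (Kgrp q0) (Gamma_adj q0 u) \<sigma>"
    and "\<sigma> (Phi q0 0 0) = Phi q0 0 0"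
    and "\<forall>x\<in>Omega_inf q0. \<sigma> x = x"
  shows "\<forall>x\<in>Kgrp q0. \<sigma> x = x"
proof -
  have CHAR_2: "CHAR('a) = 2"
    using assms(1,2) by (intro CHAR_eq_2_if_CARD_eq_power_2) simp
  have "(2::nat) ^ 4 \<le> 2 ^ f"
    using assms(3) by (intro power_increasing) simp_all
  then have "q > 2"
    using assms(1) by simp
  then have "q0 \<noteq> 1"
    using assms(6) by auto
  have "0 < q0"
    using assms(4) by simp
  have coprime: "coprime (q0 + 1) (CARD('a) - 1)" "coprime (q0 - 1) (CARD('a) - 1)"
    using coprime_factors_if_gcd_square_minus_1[OF assms(6)] assms(2) by simp_all
  interpret Gamma_automorphism_fixing_centre q0 u \<sigma>
  proof
    show "(x + y) ^ q0 = x ^ q0 + y ^ q0" for x y :: 'a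
      by (rule freshmans_dream'[where n = e]) (simp_all add: CHAR_2 assms(4))
    show "inj (\<lambda>x::'a. x ^ (q0 + 1))"
      using coprime(1) by (rule inj_power_if_coprime_card) simp
    show "inj (\<lambda>x::'a. x ^ (q0 - 1))"
      using coprime(2) by (rule inj_power_if_coprime_card) (use \<open>q0 \<noteq> 1\<close> \<open>0 < q0\<close> in simp)
    show "\<sigma> (Phi q0 0 c) = Phi q0 0 c" for c
      using assms(9,10) by (cases "c = 0") (auto simp: Omega_inf_def)
  qed (use CHAR_2 assms(8) in auto)
  show ?thesis
    using \<sigma>_fixes_Kgrp \<open>q > 2\<close> assms(2) by simp
qed

end
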